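(* Let $\varepsilon>0$. Every graph $G$ on $n$ vertices has treewidth $\mathrm{tw}(G)\le 2\,b_{\varepsilon}(G)+2\varepsilon n$.
   Context: A tree decomposition of a graph $G=(V,E)$ is a pair $(\{X_i:i\in I\},T=(I,F))$ where each $X_i\subseteq V$ and $T$ is a tree, such that (a) $\bigcup_{i\in I}X_i=V$; (b) for every edge $\{v,w\}\in E$ there is $i\in I$ with $\{v,w\}\subseteq X_i$; (c) whenever $j$ lies on the path from $i$ to $k$ in $T$, $X_i\cap X_k\subseteq X_j$. Its width is $\max_{i\in I}|X_i|-1$, and the treewidth $\mathrm{tw}(G)$ is the minimum width of a tree decomposition of $G$. For a graph $G'=(V',E')$ and $U\subseteq V'$, $N(U)$ denotes the set of vertices of $V'\setminus U$ adjacent (in $G'$) to some vertex of $U$. $G'$ is an $\varepsilon$-expander if every $U\subseteq V'$ with $|U|\le |V'|/2$ satisfies $|N(U)|\ge\varepsilon|U|$. A graph $G$ is $(b,\varepsilon)$-bounded if no subgraph $G'\subseteq G$ with at least $b$ vertices is an $\varepsilon$-expander. The $\varepsilon$-boundedness $b_\varepsilon(G)$ is the minimum $b$ for which $G$ is $(b+1,\varepsilon)$-bounded. *)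

theory Defs
  imports Complex_Main
begin

definition graph :: "'a set \<Rightarrow> 'a set set \<Rightarrow> bool" where
  "graph V E \<longleftrightarrow> finite V \<and> (\<forall>e\<in>E. e \<subseteq> V \<and> card e = 2)"

definition is_path :: "'b set \<Rightarrow> 'b set set \<Rightarrow> 'b list \<Rightarrow> 'b \<Rightarrow> 'b \<Rightarrow> bool" where
  "is_path I F p i k \<longleftrightarrow> p \<noteq> [] \<and> distinct p \<and> set p \<subseteq> I \<and> hd p = i \<and> last p = k \<and>
     (\<forall>j. Suc j < length p \<longrightarrow> {p ! j, p ! Suc j} \<in> F)"

definition is_cycle :: "'b set \<Rightarrow> 'b set set \<Rightarrow> 'b list \<Rightarrow> bool" where
  "is_cycle I F c \<longleftrightarrow> length c \<ge> 3 \<and> distinct c \<and> set c \<subseteq> I \<and>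
     (\<forall>j. Suc j < length c \<longrightarrow> {c ! j, c ! Suc j} \<in> F) \<and> {last c, hd c} \<in> F"

definition is_tree :: "'b set \<Rightarrow> 'b set set \<Rightarrow> bool" where
  "is_tree I F \<longleftrightarrow> finite I \<and> I \<noteq> {} \<and> graph I F \<and>
     (\<forall>i\<in>I. \<forall>k\<in>I. \<exists>p. is_path I F p i k) \<and> (\<nexists>c. is_cycle I F c)"

text \<open>Tree decomposition ({X i : i in I}, T = (I, F)) of G = (V, E).
  In a tree the path between two nodes is unique; "j lies on the path from i to k"
  is expressed as: j lies on every path from i to k.\<close>
definition is_tree_decomposition ::
  "'a set \<Rightarrow> 'a set set \<Rightarrow> (nat \<Rightarrow> 'a set) \<Rightarrow> nat set \<Rightarrow> nat set set \<Rightarrow> bool" where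
  "is_tree_decomposition V E X I F \<longleftrightarrow>
     is_tree I F \<and> (\<forall>i\<in>I. X i \<subseteq> V) \<and>
     (\<Union>i\<in>I. X i) = V \<and>
     (\<forall>v w. {v, w} \<in> E \<longrightarrow> (\<exists>i\<in>I. {v, w} \<subseteq> X i)) \<and>
     (\<forall>i\<in>I. \<forall>j\<in>I. \<forall>k\<in>I. (\<forall>p. is_path I F p i k \<longrightarrow> j \<in> set p) \<longrightarrow> X i \<inter> X k \<subseteq> X j)"

definition td_width :: "(nat \<Rightarrow> 'a set) \<Rightarrow> nat set \<Rightarrow> int" where
  "td_width X I = Max ((\<lambda>i. int (card (X i))) ` I) - 1"

definition treewidth :: "'a set \<Rightarrow> 'a set set \<Rightarrow> int" where
  "treewidth V E = (LEAST w. w \<in> {td_width X I | X I F. is_tree_decomposition V E X I F})"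

definition nbhd :: "'a set \<Rightarrow> 'a set set \<Rightarrow> 'a set \<Rightarrow> 'a set" where
  "nbhd V' E' U = {v \<in> V' - U. \<exists>u\<in>U. {u, v} \<in> E'}"

definition is_expander :: "real \<Rightarrow> 'a set \<Rightarrow> 'a set set \<Rightarrow> bool" where
  "is_expander \<epsilon> V' E' \<longleftrightarrow>
     (\<forall>U. U \<subseteq> V' \<and> real (card U) \<le> real (card V') / 2 \<longrightarrow>
          real (card (nbhd V' E' U)) \<ge> \<epsilon> * real (card U))"

definition subgraph :: "'a set \<Rightarrow> 'a set set \<Rightarrow> 'a set \<Rightarrow> 'a set set \<Rightarrow> bool" where
  "subgraph V' E' V E \<longleftrightarrow> V' \<subseteq> V \<and> E' \<subseteq> E \<and> (\<forall>e\<in>E'. e \<subseteq> V')"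

definition bounded_graph :: "nat \<Rightarrow> real \<Rightarrow> 'a set \<Rightarrow> 'a set set \<Rightarrow> bool" where
  "bounded_graph b \<epsilon> V E \<longleftrightarrow>
     (\<forall>V' E'. subgraph V' E' V E \<and> card V' \<ge> b \<longrightarrow> \<not> is_expander \<epsilon> V' E')"

definition boundedness :: "real \<Rightarrow> 'a set \<Rightarrow> 'a set set \<Rightarrow> nat" where
  "boundedness \<epsilon> V E = (LEAST b. bounded_graph (b + 1) \<epsilon> V E)"

end

theory Submission
  imports Defs
begin

text \<open>A graph without large \<open>\<epsilon>\<close>-expanders has small separators: any vertex set \<open>C\<close> of size
  above \<open>b\<close> contains a set \<open>U\<close> with \<open>|U| \<le> |C|/2\<close> whose neighbourhood \<open>N\<close> in \<open>C\<close> has fewer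
  than \<open>\<epsilon>|U|\<close> vertices, so \<open>N\<close> separates \<open>U\<close> from \<open>C - U - N\<close>. Recursing on both sides and
  adding \<open>N\<close> to every bag of the two resulting decompositions, laid out one after the other,
  gives by induction on \<open>|C|\<close> a path decomposition of \<open>C\<close> with bags of size at most
  \<open>b + \<epsilon>|C|\<close>: the side \<open>U\<close> gets \<open>b + \<epsilon>|U| + \<epsilon>|U| \<le> b + \<epsilon>|C|\<close>, the other side
  \<open>b + \<epsilon>(|C| - |U|) + \<epsilon>|U|\<close>. Hence in fact \<open>tw(G) \<le> b\<^sub>\<epsilon>(G) + \<epsilon>n - 1\<close>.\<close>

lemma is_path_rev:
  assumes "is_path I F p i k"
  shows "is_path I F (rev p) k i"
  unfolding is_path_def
proof (intro conjI allI impI)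
  fix q assume q: "Suc q < length (rev p)"
  have "{p ! (length p - 2 - q), p ! Suc (length p - 2 - q)} \<in> F"
    using assms q unfolding is_path_def by simp
  moreover have "Suc (length p - 2 - q) = length p - Suc q" using q by simp
  ultimately show "{rev p ! q, rev p ! Suc q} \<in> F"
    using q by (simp add: rev_nth insert_commute Suc_diff_Suc numeral_2_eq_2)
qed (use assms in \<open>auto simp: is_path_def hd_rev last_rev\<close>)

lemma is_cycle_two_neighbours:
  assumes cyc: "is_cycle I F c" and x: "x \<in> set c"
  obtains y z where "{x, y} \<in> F" "{x, z} \<in> F" "y \<in> set c" "z \<in> set c" "y \<noteq> z"
proof -
  define n where "n = length c"
  have n3: "3 \<le> n" and dist: "distinct c" using cyc unfolding is_cycle_def n_def by auto
  have step: "{c ! q, c ! (Suc q mod n)} \<in> F" if "q < n" for q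
  proof (cases "Suc q < n")
    case True
    then show ?thesis using cyc unfolding is_cycle_def n_def by simp
  next
    case False
    then have "q = n - 1" "Suc q = n" using that by auto
    moreover have "c \<noteq> []" using n3 n_def by auto
    ultimately show ?thesis
      using cyc unfolding is_cycle_def n_def by (simp add: last_conv_nth hd_conv_nth)
  qed
  obtain j where j: "j < n" "c ! j = x" using x n_def by (metis in_set_conv_nth)
  define q where "q = (j + n - 1) mod n"
  have "Suc q mod n = (j + n) mod n"
    unfolding q_def using n3 by (simp add: mod_Suc_eq)
  then have qj: "Suc q mod n = j" using j(1) by simp
  have q_ne: "Suc j mod n \<noteq> q"
  proof
    assume "Suc j mod n = q"
    then have "(j + n - 1) mod n = (Suc j + n) mod n" unfolding q_def by (metis mod_add_self2)
    moreover have "j + n - 1 \<le> Suc j + n" "Suc j + n - (j + n - 1) = 2" using n3 by auto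
    ultimately have "n dvd 2" using mod_eq_dvd_iff_nat by metis
    then show False using n3 by (auto dest: dvd_imp_le)
  qed
  have idx: "Suc j mod n < n" "q < n" using n3 unfolding q_def by auto
  show thesis
  proof
    show "{x, c ! (Suc j mod n)} \<in> F" using step[OF j(1)] j(2) by simp
    show "{x, c ! q} \<in> F"
      using step[of q] qj j(2) n3 unfolding q_def by (simp add: insert_commute)
    show "c ! (Suc j mod n) \<in> set c" "c ! q \<in> set c"
      using idx unfolding n_def by auto
    show "c ! (Suc j mod n) \<noteq> c ! q"
      using q_ne dist idx unfolding n_def by (simp add: nth_eq_iff_index_eq)
  qed
qed

definition path_edges :: "nat \<Rightarrow> nat set set" where
  "path_edges n = (\<lambda>i. {i, Suc i}) ` {i. Suc i < n}"

lemma graph_path_edges: "graph {0..<n} (path_edges n)"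
  unfolding graph_def path_edges_def by auto

lemma is_path_upt:
  assumes "i \<le> k" "k < n"
  shows "is_path {0..<n} (path_edges n) [i..<Suc k] i k"
  using assms unfolding is_path_def path_edges_def by (auto simp del: upt_Suc simp: hd_upt)

lemma path_edges_no_cycle: "\<not> is_cycle I (path_edges n) c"
proof
  assume cyc: "is_cycle I (path_edges n) c"
  then have "c \<noteq> []" unfolding is_cycle_def by auto
  define x where "x = Max (set c)"
  have x: "x \<in> set c" using \<open>c \<noteq> []\<close> unfolding x_def by simp
  have below: "y = x - 1" if "{x, y} \<in> path_edges n" "y \<in> set c" for y
  proof -
    have "y \<le> x" using that(2) unfolding x_def by simp
    with that(1) show ?thesis unfolding path_edges_def by (auto simp: doubleton_eq_iff)
  qed
  obtain y z where "{x, y} \<in> path_edges n" "{x, z} \<in> path_edges n"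
    "y \<in> set c" "z \<in> set c" "y \<noteq> z"
    using is_cycle_two_neighbours[OF cyc x] .
  then show False using below by blast
qed

lemma is_tree_path_edges:
  assumes "0 < n"
  shows "is_tree {0..<n} (path_edges n)"
  unfolding is_tree_def
proof (intro conjI ballI)
  fix i k assume "i \<in> {0..<n}" "k \<in> {0..<n}"
  then consider "i \<le> k" "k < n" | "k \<le> i" "i < n" by fastforce
  then show "\<exists>p. is_path {0..<n} (path_edges n) p i k"
  proof cases
    case 1
    then show ?thesis using is_path_upt by blast
  next
    case 2
    then show ?thesis using is_path_rev[OF is_path_upt[OF 2]] by blast
  qed
qed (use assms graph_path_edges path_edges_no_cycle in auto)

text \<open>Taken relative to a vertex subset \<open>C\<close>: only the edges of \<open>E\<close> inside \<open>C\<close> must be covered,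
  so that \<open>E\<close> can stay the edge set of the whole graph throughout the recursion.\<close>

definition path_decomposition :: "'a set \<Rightarrow> 'a set set \<Rightarrow> (nat \<Rightarrow> 'a set) \<Rightarrow> nat \<Rightarrow> bool" where
  "path_decomposition C E X n \<longleftrightarrow> 0 < n \<and> (\<forall>i<n. X i \<subseteq> C) \<and> C \<subseteq> (\<Union>i<n. X i) \<and>
     (\<forall>v w. {v, w} \<in> E \<longrightarrow> v \<in> C \<longrightarrow> w \<in> C \<longrightarrow> (\<exists>i<n. {v, w} \<subseteq> X i)) \<and>
     (\<forall>i j k. i \<le> j \<longrightarrow> j \<le> k \<longrightarrow> k < n \<longrightarrow> X i \<inter> X k \<subseteq> X j)"

lemma path_decompositionI:
  assumes "0 < n" "\<And>i. i < n \<Longrightarrow> X i \<subseteq> C" "\<And>v. v \<in> C \<Longrightarrow> \<exists>i<n. v \<in> X i"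
    "\<And>v w. {v, w} \<in> E \<Longrightarrow> v \<in> C \<Longrightarrow> w \<in> C \<Longrightarrow> \<exists>i<n. {v, w} \<subseteq> X i"
    "\<And>i j k. i \<le> j \<Longrightarrow> j \<le> k \<Longrightarrow> k < n \<Longrightarrow> X i \<inter> X k \<subseteq> X j"
  shows "path_decomposition C E X n"
  unfolding path_decomposition_def
proof (intro conjI allI impI)
  show "C \<subseteq> (\<Union>i<n. X i)" using assms(3) by blast
qed (use assms in auto)

lemma
  assumes "path_decomposition C E X n"
  shows path_decomposition_pos: "0 < n"
    and path_decomposition_bag_subset: "i < n \<Longrightarrow> X i \<subseteq> C"
    and path_decomposition_cover: "v \<in> C \<Longrightarrow> \<exists>i<n. v \<in> X i"
    and path_decomposition_edge: "{v, w} \<in> E \<Longrightarrow> v \<in> C \<Longrightarrow> w \<in> C \<Longrightarrow> \<exists>i<n. {v, w} \<subseteq> X i"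
    and path_decomposition_contiguous: "i \<le> j \<Longrightarrow> j \<le> k \<Longrightarrow> k < n \<Longrightarrow> X i \<inter> X k \<subseteq> X j"
  using assms unfolding path_decomposition_def by auto

lemma path_decomposition_single: "path_decomposition C E (\<lambda>_. C) 1"
  by (rule path_decompositionI) auto

lemma tree_decomposition_of_path_decomposition:
  assumes pd: "path_decomposition V E X n" and g: "graph V E"
  shows "is_tree_decomposition V E X {0..<n} (path_edges n)"
proof -
  have running_intersection: "X i \<inter> X k \<subseteq> X j"
    if ik: "i < n" "k < n" and all_paths: "\<forall>p. is_path {0..<n} (path_edges n) p i k \<longrightarrow> j \<in> set p"
    for i j k
  proof (cases "i \<le> k")
    case True
    then have "j \<in> set [i..<Suc k]" using all_paths is_path_upt[OF True ik(2)] by blast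
    then have "i \<le> j" "j \<le> k" by auto
    then show ?thesis using ik path_decomposition_contiguous[OF pd] by blast
  next
    case False
    then have "k \<le> i" by simp
    then have "j \<in> set (rev [k..<Suc i])" using all_paths is_path_rev[OF is_path_upt[OF _ ik(1)]] by blast
    then have "k \<le> j" "j \<le> i" by auto
    then show ?thesis using ik path_decomposition_contiguous[OF pd, of k j i] by blast
  qed
  have "is_tree {0..<n} (path_edges n)" using path_decomposition_pos[OF pd] by (rule is_tree_path_edges)
  moreover have "\<forall>i\<in>{0..<n}. X i \<subseteq> V" using path_decomposition_bag_subset[OF pd] by simp
  moreover have "(\<Union>i\<in>{0..<n}. X i) = V"
    using path_decomposition_bag_subset[OF pd] path_decomposition_cover[OF pd] by fastforce
  moreover have "\<forall>v w. {v, w} \<in> E \<longrightarrow> (\<exists>i\<in>{0..<n}. {v, w} \<subseteq> X i)"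
    using path_decomposition_edge[OF pd] g unfolding graph_def by fastforce
  ultimately show ?thesis
    unfolding is_tree_decomposition_def using running_intersection by simp
qed

lemma path_decomposition_append:
  assumes pdA: "path_decomposition A E XA nA" and pdB: "path_decomposition B E XB nB"
    and disj: "A \<inter> B = {}" and no_edge: "\<And>v w. {v, w} \<in> E \<Longrightarrow> v \<in> A \<Longrightarrow> w \<notin> B"
  shows "path_decomposition (A \<union> B \<union> S) E
           (\<lambda>i. (if i < nA then XA i else XB (i - nA)) \<union> S) (nA + nB)"
    (is "path_decomposition ?C E ?X ?n")
proof (rule path_decompositionI)
  have bag_A: "?X i = XA i \<union> S" if "i < nA" for i using that by simp
  have bag_B: "?X (nA + i) = XB i \<union> S" for i by simp
  have in_bag: "\<exists>i<?n. v \<in> ?X i" if v: "v \<in> A \<union> B \<union> S" for v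
  proof -
    consider "v \<in> A" | "v \<in> B" | "v \<in> S" using v by blast
    then show ?thesis
    proof cases
      case 1
      then obtain i where "i < nA" "v \<in> XA i" using path_decomposition_cover[OF pdA] by blast
      then show ?thesis using bag_A by (intro exI[of _ i]) auto
    next
      case 2
      then obtain i where "i < nB" "v \<in> XB i" using path_decomposition_cover[OF pdB] by blast
      then show ?thesis using bag_B by (intro exI[of _ "nA + i"]) auto
    next
      case 3
      then show ?thesis using path_decomposition_pos[OF pdA] by auto
    qed
  qed
  show "0 < ?n" using path_decomposition_pos[OF pdA] by simp
  show "?X i \<subseteq> ?C" if "i < ?n" for i
  proof (cases "i < nA")
    case False
    then have "i - nA < nB" using that by simp
    then show ?thesis using False path_decomposition_bag_subset[OF pdB] by auto
  qed (use path_decomposition_bag_subset[OF pdA] in auto)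
  show "\<exists>i<?n. v \<in> ?X i" if "v \<in> ?C" for v using in_bag that .
  show "\<exists>i<?n. {v, w} \<subseteq> ?X i" if e: "{v, w} \<in> E" "v \<in> ?C" "w \<in> ?C" for v w
  proof -
    have "{w, v} \<in> E" using e(1) by (simp add: insert_commute)
    then consider "v \<in> S" | "w \<in> S" | "v \<in> A" "w \<in> A" | "v \<in> B" "w \<in> B"
      using e no_edge by blast
    then show ?thesis
    proof cases
      case 1
      then show ?thesis using in_bag[OF e(3)] by auto
    next
      case 2
      then show ?thesis using in_bag[OF e(2)] by auto
    next
      case 3
      then obtain i where "i < nA" "{v, w} \<subseteq> XA i" using path_decomposition_edge[OF pdA e(1)] by blast
      then show ?thesis using bag_A by (intro exI[of _ i]) auto
    next
      case 4
      then obtain i where "i < nB" "{v, w} \<subseteq> XB i" using path_decomposition_edge[OF pdB e(1)] by blast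
      then show ?thesis using bag_B by (intro exI[of _ "nA + i"]) auto
    qed
  qed
  show "?X i \<inter> ?X k \<subseteq> ?X j" if ijk: "i \<le> j" "j \<le> k" "k < ?n" for i j k
  proof
    fix v assume v: "v \<in> ?X i \<inter> ?X k"
    show "v \<in> ?X j"
    proof (cases "v \<in> S")
      case False
      show ?thesis
      proof (cases "k < nA")
        case True
        then show ?thesis using path_decomposition_contiguous[OF pdA ijk(1,2) True] v ijk by auto
      next
        case k: False
        have "k - nA < nB" using k ijk(3) by simp
        then have "v \<in> B" using path_decomposition_bag_subset[OF pdB, of "k - nA"] v False k by auto
        then have "v \<notin> A" using disj by blast
        then have i: "\<not> i < nA" using path_decomposition_bag_subset[OF pdA, of i] v False by auto
        have "XB (i - nA) \<inter> XB (k - nA) \<subseteq> XB (j - nA)"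
          using i k ijk by (intro path_decomposition_contiguous[OF pdB]) auto
        then show ?thesis using i v False ijk by auto
      qed
    qed simp
  qed
qed

lemma card_appended_bag_le:
  fixes nA nB i :: nat
  assumes "\<forall>i<nA. real (card (XA i)) \<le> wA" "\<forall>i<nB. real (card (XB i)) \<le> wB"
    and "i < nA + nB"
  shows "real (card ((if i < nA then XA i else XB (i - nA)) \<union> S)) \<le> max wA wB + real (card S)"
proof -
  have "real (card ((if i < nA then XA i else XB (i - nA)) \<union> S))
      \<le> real (card (if i < nA then XA i else XB (i - nA))) + real (card S)"
    using card_Un_le[of "if i < nA then XA i else XB (i - nA)" S] by (simp flip: of_nat_add)
  moreover have "real (card (if i < nA then XA i else XB (i - nA))) \<le> max wA wB"
  proof (cases "i < nA")
    case False
    then have "i - nA < nB" using assms(3) by simp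
    then show ?thesis using False assms(2) by fastforce
  qed (use assms(1) in fastforce)
  ultimately show ?thesis by linarith
qed

lemma separator_of_non_expander:
  assumes fin: "finite C" and ne: "\<not> is_expander \<epsilon> C {e \<in> E. e \<subseteq> C}"
  obtains U N where "U \<subseteq> C" "U \<noteq> {}" "real (card U) \<le> real (card C) / 2"
    "N \<subseteq> C - U" "real (card N) < \<epsilon> * real (card U)"
    "\<And>v w. {v, w} \<in> E \<Longrightarrow> v \<in> U \<Longrightarrow> w \<notin> C - U - N"
proof -
  obtain U where U: "U \<subseteq> C" "real (card U) \<le> real (card C) / 2"
    and small: "real (card (nbhd C {e \<in> E. e \<subseteq> C} U)) < \<epsilon> * real (card U)"
    using ne unfolding is_expander_def by (auto simp: not_le)
  show thesis
  proof
    show "U \<noteq> {}" using small by auto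
    show "nbhd C {e \<in> E. e \<subseteq> C} U \<subseteq> C - U" unfolding nbhd_def by auto
    fix v w assume "{v, w} \<in> E" "v \<in> U"
    then show "w \<notin> C - U - nbhd C {e \<in> E. e \<subseteq> C} U"
      using U(1) unfolding nbhd_def by (auto simp: insert_commute)
  qed (use U small in auto)
qed

lemma path_decomposition_small_bags:
  fixes V :: "'a set" and E :: "'a set set" and \<epsilon> :: real
  assumes g: "graph V E" and bd: "bounded_graph (b + 1) \<epsilon> V E" and ep: "0 \<le> \<epsilon>"
    and "C \<subseteq> V"
  shows "\<exists>X n. path_decomposition C E X n \<and> (\<forall>i<n. real (card (X i)) \<le> real b + \<epsilon> * real (card C))"
  using \<open>C \<subseteq> V\<close>
proof (induction "card C" arbitrary: C rule: less_induct)
  case less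
  have finC: "finite C" using less.prems g finite_subset unfolding graph_def by blast
  show ?case
  proof (cases "card C \<le> b")
    case True
    then have "real (card C) \<le> real b + \<epsilon> * real (card C)" using ep by (intro add_increasing2) auto
    then show ?thesis using path_decomposition_single by fastforce
  next
    case False
    have "subgraph C {e \<in> E. e \<subseteq> C} V E" unfolding subgraph_def using less.prems by auto
    then have "\<not> is_expander \<epsilon> C {e \<in> E. e \<subseteq> C}"
      using bd False unfolding bounded_graph_def by simp
    then obtain U N where U: "U \<subseteq> C" "U \<noteq> {}" "real (card U) \<le> real (card C) / 2"
      and N: "N \<subseteq> C - U" "real (card N) < \<epsilon> * real (card U)"
      and sep: "\<And>v w. {v, w} \<in> E \<Longrightarrow> v \<in> U \<Longrightarrow> w \<notin> C - U - N"
      by (rule separator_of_non_expander[OF finC]) blast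
    define B where "B = C - U - N"
    have "0 < card U" using U(1,2) finC by (simp add: card_gt_0_iff finite_subset)
    then have card_U: "card U < card C" using U(3) by linarith
    have "card B \<le> card (C - U)" unfolding B_def using finC by (intro card_mono) auto
    moreover have "real (card (C - U)) = real (card C) - real (card U)"
      using U(1) finC by (simp add: card_Diff_subset finite_subset card_mono of_nat_diff)
    ultimately have card_B: "real (card B) \<le> real (card C) - real (card U)" by linarith
    then have "card B < card C" using \<open>0 < card U\<close> by linarith
    obtain XU nU where XU: "path_decomposition U E XU nU"
      "\<forall>i<nU. real (card (XU i)) \<le> real b + \<epsilon> * real (card U)"
      using less.hyps[OF card_U] U(1) less.prems by blast
    obtain XB nB where XB: "path_decomposition B E XB nB"
      "\<forall>i<nB. real (card (XB i)) \<le> real b + \<epsilon> * real (card B)"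
      using less.hyps[OF \<open>card B < card C\<close>] less.prems unfolding B_def by blast
    define X where "X i = (if i < nU then XU i else XB (i - nU)) \<union> N" for i
    have "path_decomposition (U \<union> B \<union> N) E X (nU + nB)"
      unfolding X_def using XU(1) XB(1) sep
      by (intro path_decomposition_append) (auto simp: B_def)
    moreover have "U \<union> B \<union> N = C" using U(1) N(1) unfolding B_def by auto
    moreover have "real (card (X i)) \<le> real b + \<epsilon> * real (card C)" if "i < nU + nB" for i
    proof -
      have "\<epsilon> * real (card U) \<le> \<epsilon> * real (card C) / 2"
        using mult_left_mono[OF U(3) ep] by simp
      moreover have "\<epsilon> * real (card B) \<le> \<epsilon> * real (card C) - \<epsilon> * real (card U)"
        using card_B ep by (simp add: mult_left_mono flip: right_diff_distrib)
      moreover have "real (card (X i))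
          \<le> max (real b + \<epsilon> * real (card U)) (real b + \<epsilon> * real (card B)) + real (card N)"
        unfolding X_def using card_appended_bag_le[OF XU(2) XB(2) that] .
      ultimately show ?thesis using N(2) by linarith
    qed
    ultimately show ?thesis by blast
  qed
qed

lemma td_width_le:
  assumes "finite I" "I \<noteq> {}" "\<forall>i\<in>I. real (card (X i)) \<le> w"
  shows "real_of_int (td_width X I) \<le> w - 1"
proof -
  have "Max ((\<lambda>i. int (card (X i))) ` I) \<in> (\<lambda>i. int (card (X i))) ` I"
    using assms(1,2) by (intro Max_in) auto
  then obtain i where "i \<in> I" "Max ((\<lambda>i. int (card (X i))) ` I) = int (card (X i))" by blast
  then show ?thesis using assms(3) unfolding td_width_def by simp
qed

lemma td_width_ge_minus_one:
  assumes "is_tree_decomposition V E X I F"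
  shows "- 1 \<le> td_width X I"
proof -
  have "is_tree I F" using assms unfolding is_tree_decomposition_def by simp
  then obtain i where "finite I" "i \<in> I" unfolding is_tree_def by auto
  then have "int (card (X i)) \<le> Max ((\<lambda>i. int (card (X i))) ` I)" by (intro Max_ge) auto
  then show ?thesis unfolding td_width_def by linarith
qed

lemma Least_int_le:
  fixes c x :: int
  assumes "\<And>w. P w \<Longrightarrow> c \<le> w" "P x"
  shows "(LEAST w. P w) \<le> x"
proof -
  define k where "k = (LEAST k::nat. P (c + int k))"
  have x: "P (c + int (nat (x - c)))" using assms by simp
  have Pk: "P (c + int k)" unfolding k_def using x by (rule LeastI)
  have least: "c + int k \<le> w" if "P w" for w
  proof -
    have "P (c + int (nat (w - c)))" using that assms(1)[OF that] by simp
    then have "k \<le> nat (w - c)" unfolding k_def by (rule Least_le)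
    then show ?thesis using assms(1)[OF that] by linarith
  qed
  have "(LEAST w. P w) = c + int k" using Pk least by (rule Least_equality)
  then show ?thesis using least[OF assms(2)] by simp
qed

lemma treewidth_le_td_width:
  assumes "is_tree_decomposition V E X I F"
  shows "treewidth V E \<le> td_width X I"
  unfolding treewidth_def
  by (rule Least_int_le[of _ "- 1"]) (use assms td_width_ge_minus_one in blast)+

lemma bounded_graph_boundedness:
  assumes "graph V E"
  shows "bounded_graph (boundedness \<epsilon> V E + 1) \<epsilon> V E"
  unfolding boundedness_def
proof (rule LeastI)
  have "finite V" using assms unfolding graph_def by blast
  show "bounded_graph (card V + 1) \<epsilon> V E"
    unfolding bounded_graph_def
  proof (intro allI impI)
    fix V' :: "'a set" and E' assume V': "subgraph V' E' V E \<and> card V + 1 \<le> card V'"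
    then have "card V' \<le> card V"
      using \<open>finite V\<close> card_mono unfolding subgraph_def by blast
    then show "\<not> is_expander \<epsilon> V' E'" using V' by simp
  qed
qed

theorem theorem6:
  fixes V :: "'a set" and E :: "'a set set" and \<epsilon> :: real
  assumes "\<epsilon> > 0" and "graph V E"
  shows "real_of_int (treewidth V E) \<le> 2 * real (boundedness \<epsilon> V E) + 2 * \<epsilon> * real (card V)"
proof -
  define b where "b = boundedness \<epsilon> V E"
  have "bounded_graph (b + 1) \<epsilon> V E"
    unfolding b_def using assms(2) by (rule bounded_graph_boundedness)
  moreover have "0 \<le> \<epsilon>" using assms(1) by simp
  ultimately obtain X n where pd: "path_decomposition V E X n"
    and bags: "\<forall>i<n. real (card (X i)) \<le> real b + \<epsilon> * real (card V)"
    using path_decomposition_small_bags[OF assms(2) _ _ subset_refl] by blast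
  have "treewidth V E \<le> td_width X {0..<n}"
    using treewidth_le_td_width tree_decomposition_of_path_decomposition[OF pd assms(2)] .
  moreover have "real_of_int (td_width X {0..<n}) \<le> real b + \<epsilon> * real (card V) - 1"
    using path_decomposition_pos[OF pd] bags by (intro td_width_le) auto
  moreover have "0 \<le> \<epsilon> * real (card V)" using assms(1) by simp
  ultimately show ?thesis unfolding b_def by linarith
qed

end
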